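(* For every integer $k\ge1$, the monomials $u^iv^jw^{2k-i-j}$ occurring with nonzero coefficient in $P_{k/(k+1)}(u,v,w)$ are exactly those with $(i,j)\in\mathbb{Z}^2$, $i,j\ge0$, $\frac{i}{k}+\frac{j}{k+1}\ge1$ and $i+j\le 2k$.
   Context: Markov polynomials. Let $x,y,z$ be indeterminates. Consider the set consisting of all rationals $\rho\in[0,1]$, each written in lowest terms $\rho=a/b$ with integers $a\ge 0$, $b\ge 1$, together with the formal symbol $1/0$. Define Laurent polynomials $M_\rho(x,y,z)$ recursively by $M_{1/0}=y$, $M_{0/1}=x$, $M_{1/1}=\frac{x^2+y^2}{z}$, and: whenever $a/b$, $c/d$ are in this set with $|ad-bc|=1$ and $(a+2c)/(b+2d)\in[0,1]$, then $M_{\frac{a+2c}{b+2d}}=\big(M_{c/d}^2+M_{\frac{a+c}{b+d}}^2\big)/M_{a/b}$. This determines $M_\rho$ for every rational $\rho\in[0,1]$. Numerator. For coprime $1\le a\le b$, $P_{a/b}(u,v,w)$ denotes the homogeneous polynomial of degree $a+b-1$ such that $M_{a/b}(x,y,z)=P_{a/b}(x^2,y^2,z^2)/(x^{a-1}y^{b-1}z^{a+b-1})$; its existence is known. *)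

theory Defs
  imports Complex_Main
begin

text \<open>Indices: a pair (a,b) of naturals stands for the fraction a/b. The index set consists
of all rationals in [0,1] in lowest terms (coprime a b, a \<le> b, b \<ge> 1) together with 1/0.\<close>

definition markov_index :: "nat \<times> nat \<Rightarrow> bool" where
  "markov_index p \<longleftrightarrow> (case p of (a, b) \<Rightarrow>
      (coprime a b \<and> a \<le> b \<and> 1 \<le> b) \<or> (a = 1 \<and> b = 0))"

text \<open>Laurent polynomials M are represented by the functions they define on the positive
orthant x,y,z > 0 (where all M are positive). A family M satisfies the defining recursion.\<close>

definition markov_family :: "(nat \<times> nat \<Rightarrow> real \<Rightarrow> real \<Rightarrow> real \<Rightarrow> real) \<Rightarrow> bool" where
  "markov_family M \<longleftrightarrow>
     (\<forall>x y z. x > 0 \<longrightarrow> y > 0 \<longrightarrow> z > 0 \<longrightarrow>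
        M (1, 0) x y z = y \<and> M (0, 1) x y z = x \<and> M (1, 1) x y z = (x^2 + y^2) / z) \<and>
     (\<forall>a b c d. markov_index (a, b) \<longrightarrow> markov_index (c, d) \<longrightarrow>
        \<bar>int a * int d - int b * int c\<bar> = 1 \<longrightarrow> a + 2 * c \<le> b + 2 * d \<longrightarrow>
        (\<forall>x y z. x > 0 \<longrightarrow> y > 0 \<longrightarrow> z > 0 \<longrightarrow>
           M (a + 2 * c, b + 2 * d) x y z =
             ((M (c, d) x y z)^2 + (M (a + c, b + d) x y z)^2) / M (a, b) x y z))"

definition hom_poly :: "nat \<Rightarrow> (nat \<Rightarrow> nat \<Rightarrow> real) \<Rightarrow> real \<Rightarrow> real \<Rightarrow> real \<Rightarrow> real" where
  "hom_poly n c u v w = (\<Sum>i\<le>n. \<Sum>j\<le>n - i. c i j * u ^ i * v ^ j * w ^ (n - i - j))"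

end

(*
  The numerators P_k of M_{k/(k+1)} are generated, together with auxiliary polynomials R_k, by
  P_(k+1) = (u + v) R_k + u w P_k  and  R_(k+1) = (u + v) P_(k+1) + v w R_k.  All coefficients
  are nonnegative, so there is no cancellation and the supports ({i + j > k} plus the monomial
  u^k, resp. the band k < i + j) follow by induction.  Eliminating R_k gives a three-term linear
  recurrence for P_k whose Casoratian is (u + v)^2 u^k v^(k+1) w^(2k+1); this is precisely the
  identity which makes P_k(x^2, y^2, z^2) x / (x y z^2)^k satisfy the Markov recursion
  M_((k+2)/(k+3)) M_(k/(k+1)) = M_(1/1)^2 + M_((k+1)/(k+2))^2.  Coefficients of a polynomial are
  determined by its values on the positive orthant, so the given c are the coefficients of P_k.
*)

theory Submission
  imports Defs
begin

definition shift_u :: "(nat \<Rightarrow> nat \<Rightarrow> real) \<Rightarrow> nat \<Rightarrow> nat \<Rightarrow> real" where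
  "shift_u c i j = (if i = 0 then 0 else c (i - 1) j)"

definition shift_v :: "(nat \<Rightarrow> nat \<Rightarrow> real) \<Rightarrow> nat \<Rightarrow> nat \<Rightarrow> real" where
  "shift_v c i j = (if j = 0 then 0 else c i (j - 1))"

lemma hom_poly_add:
  "hom_poly n (\<lambda>i j. c i j + d i j) u v w = hom_poly n c u v w + hom_poly n d u v w"
  by (simp add: hom_poly_def sum.distrib ring_distribs)

lemma hom_poly_diff:
  "hom_poly n (\<lambda>i j. c i j - d i j) u v w = hom_poly n c u v w - hom_poly n d u v w"
  by (simp add: hom_poly_def sum_subtractf left_diff_distrib)

lemma hom_poly_shift_u: "hom_poly (Suc n) (shift_u c) u v w = u * hom_poly n c u v w"
  unfolding hom_poly_def
  by (subst sum.atMost_Suc_shift)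
    (simp add: shift_u_def sum_distrib_left mult_ac del: sum.atMost_Suc)

lemma hom_poly_shift_v: "hom_poly (Suc n) (shift_v c) u v w = v * hom_poly n c u v w"
proof -
  have "(\<Sum>j\<le>Suc n - i. shift_v c i j * u ^ i * v ^ j * w ^ (Suc n - i - j))
        = v * (\<Sum>j\<le>n - i. c i j * u ^ i * v ^ j * w ^ (n - i - j))" if "i \<le> n" for i
  proof -
    have "Suc n - i = Suc (n - i)" using that by simp
    then show ?thesis
      by (simp only:, subst sum.atMost_Suc_shift)
        (simp add: shift_v_def sum_distrib_left mult_ac del: sum.atMost_Suc)
  qed
  then show ?thesis
    unfolding hom_poly_def by (simp add: sum.atMost_Suc shift_v_def sum_distrib_left)
qed

lemma hom_poly_Suc_eq_times_w:
  assumes "\<And>i j. n < i + j \<Longrightarrow> c i j = 0"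
  shows "hom_poly (Suc n) c u v w = w * hom_poly n c u v w"
proof -
  have "(\<Sum>j\<le>Suc n - i. c i j * u ^ i * v ^ j * w ^ (Suc n - i - j))
        = w * (\<Sum>j\<le>n - i. c i j * u ^ i * v ^ j * w ^ (n - i - j))" if "i \<le> n" for i
  proof -
    have "Suc n - i = Suc (n - i)" "c i (Suc (n - i)) = 0"
      using assms that by auto
    moreover have "Suc n - i - j = Suc (n - i - j)" if "j \<le> n - i" for j
      using that \<open>i \<le> n\<close> by simp
    ultimately show ?thesis
      by (simp add: sum_distrib_left mult_ac)
  qed
  moreover have "c (Suc n) 0 = 0" using assms by simp
  ultimately show ?thesis
    unfolding hom_poly_def by (simp add: sum.atMost_Suc sum_distrib_left)
qed

lemma hom_poly_coeffs_unique:
  assumes "\<And>u v w. u > 0 \<Longrightarrow> v > 0 \<Longrightarrow> w > 0 \<Longrightarrow> hom_poly n c u v w = hom_poly n d u v w"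
    and "i + j \<le> n"
  shows "c i j = d i j"
proof -
  define e where "e = (\<lambda>i j. c i j - d i j)"
  have zero: "hom_poly n e u v 1 = 0" if "u > 0" "v > 0" for u v
    using assms(1)[OF that, of 1] by (simp add: e_def hom_poly_diff)
  have "infinite {x::real. x > 0}"
    using infinite_Ioi by (simp add: greaterThan_def)
  define a where "a v i = (\<Sum>j\<le>n - i. e i j * v ^ j)" for v :: real and i
  have a_zero: "a v i = 0" if "v > 0" "i \<le> n" for v i
  proof -
    have "hom_poly n e u v 1 = (\<Sum>i\<le>n. a v i * u ^ i)" for u
      unfolding hom_poly_def a_def by (simp add: sum_distrib_left sum_distrib_right mult_ac)
    with zero \<open>v > 0\<close> have "{x. x > 0} \<subseteq> {u. (\<Sum>i\<le>n. a v i * u ^ i) = 0}"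
      by (metis (mono_tags, lifting) mem_Collect_eq subsetI)
    then show ?thesis
      using polyfun_finite_roots[of "a v" n] finite_subset \<open>infinite {x::real. x > 0}\<close> that(2)
      by blast
  qed
  have "{x. x > 0} \<subseteq> {v. (\<Sum>j\<le>n - i. e i j * v ^ j) = 0}"
    using a_zero assms(2) by (auto simp: a_def)
  then have "\<forall>j\<le>n - i. e i j = 0"
    using polyfun_finite_roots[of "e i" "n - i"] finite_subset \<open>infinite {x::real. x > 0}\<close>
    by blast
  then show ?thesis
    using assms(2) by (auto simp: e_def)
qed

text \<open>Coefficient arrays in the encoding of \<^const>\<open>hom_poly\<close>: a shift multiplies by u or v
  in one degree higher, and multiplication by w is implicit in raising the degree.\<close>

fun P_coeff :: "nat \<Rightarrow> nat \<Rightarrow> nat \<Rightarrow> real"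
  and R_coeff :: "nat \<Rightarrow> nat \<Rightarrow> nat \<Rightarrow> real" where
  "P_coeff 0 i j = (if i = 0 \<and> j = 0 then 1 else 0)"
| "R_coeff 0 i j = shift_u (P_coeff 0) i j + shift_v (P_coeff 0) i j"
| "P_coeff (Suc k) i j =
     shift_u (R_coeff k) i j + shift_v (R_coeff k) i j + shift_u (P_coeff k) i j"
| "R_coeff (Suc k) i j =
     shift_u (P_coeff (Suc k)) i j + shift_v (P_coeff (Suc k)) i j + shift_v (R_coeff k) i j"

lemma nonneg_sum3_nonzero_iff:
  "(a::real) \<ge> 0 \<Longrightarrow> b \<ge> 0 \<Longrightarrow> c \<ge> 0 \<Longrightarrow> a + b + c \<noteq> 0 \<longleftrightarrow> a \<noteq> 0 \<or> b \<noteq> 0 \<or> c \<noteq> 0"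
  by linarith

lemma P_R_coeff_nonneg_and_support:
  "(\<forall>i j. P_coeff k i j \<ge> 0 \<and>
      (P_coeff k i j \<noteq> 0 \<longleftrightarrow> i + j \<le> 2 * k \<and> (k < i + j \<or> (i = k \<and> j = 0)))) \<and>
   (\<forall>i j. R_coeff k i j \<ge> 0 \<and> (R_coeff k i j \<noteq> 0 \<longleftrightarrow> k < i + j \<and> i + j \<le> 2 * k + 1))"
proof (induction k)
  case 0
  show ?case by (auto simp: shift_u_def shift_v_def)
next
  case (Suc k)
  then have P_nonneg: "\<And>i j. P_coeff k i j \<ge> 0"
    and P_supp: "\<And>i j. P_coeff k i j \<noteq> 0 \<longleftrightarrow> i + j \<le> 2 * k \<and> (k < i + j \<or> (i = k \<and> j = 0))"
    and R_nonneg: "\<And>i j. R_coeff k i j \<ge> 0"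
    and R_supp: "\<And>i j. R_coeff k i j \<noteq> 0 \<longleftrightarrow> k < i + j \<and> i + j \<le> 2 * k + 1"
    by blast+
  have P_nonneg_Suc: "P_coeff (Suc k) i j \<ge> 0" for i j
    using P_nonneg R_nonneg by (simp add: shift_u_def shift_v_def)
  have P_supp_Suc: "P_coeff (Suc k) i j \<noteq> 0 \<longleftrightarrow>
      i + j \<le> 2 * Suc k \<and> (Suc k < i + j \<or> (i = Suc k \<and> j = 0))" for i j
  proof -
    have "P_coeff (Suc k) i j \<noteq> 0 \<longleftrightarrow>
        shift_u (R_coeff k) i j \<noteq> 0 \<or> shift_v (R_coeff k) i j \<noteq> 0 \<or> shift_u (P_coeff k) i j \<noteq> 0"
      unfolding P_coeff.simps(2)
      by (rule nonneg_sum3_nonzero_iff)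
        (use P_nonneg R_nonneg in \<open>simp_all add: shift_u_def shift_v_def\<close>)
    also have "\<dots> \<longleftrightarrow> i + j \<le> 2 * Suc k \<and> (Suc k < i + j \<or> (i = Suc k \<and> j = 0))"
      unfolding shift_u_def shift_v_def
      using P_supp[of "i - 1" j] R_supp[of "i - 1" j] R_supp[of i "j - 1"]
      by (cases i; cases j) (simp_all, linarith+)
    finally show ?thesis .
  qed
  have R_nonneg_Suc: "R_coeff (Suc k) i j \<ge> 0" for i j
    using P_nonneg_Suc R_nonneg by (simp add: shift_u_def shift_v_def del: P_coeff.simps(2))
  have R_supp_Suc: "R_coeff (Suc k) i j \<noteq> 0 \<longleftrightarrow> Suc k < i + j \<and> i + j \<le> 2 * Suc k + 1" for i j
  proof -
    have "R_coeff (Suc k) i j \<noteq> 0 \<longleftrightarrow> shift_u (P_coeff (Suc k)) i j \<noteq> 0 \<or>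
        shift_v (P_coeff (Suc k)) i j \<noteq> 0 \<or> shift_v (R_coeff k) i j \<noteq> 0"
      unfolding R_coeff.simps(2)
      by (rule nonneg_sum3_nonzero_iff)
        (use P_nonneg_Suc R_nonneg in
          \<open>simp_all add: shift_u_def shift_v_def del: P_coeff.simps(2)\<close>)
    also have "\<dots> \<longleftrightarrow> Suc k < i + j \<and> i + j \<le> 2 * Suc k + 1"
      unfolding shift_u_def shift_v_def
      using P_supp_Suc[of "i - 1" j] P_supp_Suc[of i "j - 1"] R_supp[of i "j - 1"]
      by (cases i; cases j) (simp_all del: P_coeff.simps(2), linarith+)
    finally show ?thesis .
  qed
  show ?case
    by (simp add: P_nonneg_Suc P_supp_Suc R_nonneg_Suc R_supp_Suc
        del: P_coeff.simps(2) R_coeff.simps(2))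
qed

lemma P_coeff_nonzero_iff:
  "P_coeff k i j \<noteq> 0 \<longleftrightarrow> i + j \<le> 2 * k \<and> (k < i + j \<or> (i = k \<and> j = 0))"
  using P_R_coeff_nonneg_and_support[of k] by simp

lemma P_coeff_eq_0_above: "2 * k < i + j \<Longrightarrow> P_coeff k i j = 0"
  using P_coeff_nonzero_iff[of k i j] by linarith

lemma R_coeff_eq_0_above:
  assumes "2 * k + 1 < i + j"
  shows "R_coeff k i j = 0"
proof (rule ccontr)
  assume "R_coeff k i j \<noteq> 0"
  then have "i + j \<le> 2 * k + 1"
    using P_R_coeff_nonneg_and_support[of k] by blast
  with assms show False by simp
qed

definition P_poly :: "nat \<Rightarrow> real \<Rightarrow> real \<Rightarrow> real \<Rightarrow> real" where
  "P_poly k = hom_poly (2 * k) (P_coeff k)"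

definition R_poly :: "nat \<Rightarrow> real \<Rightarrow> real \<Rightarrow> real \<Rightarrow> real" where
  "R_poly k = hom_poly (2 * k + 1) (R_coeff k)"

lemma P_poly_0: "P_poly 0 u v w = 1"
  by (simp add: P_poly_def hom_poly_def)

lemma R_poly_0: "R_poly 0 u v w = u + v"
proof -
  have "R_coeff 0 = (\<lambda>i j. shift_u (P_coeff 0) i j + shift_v (P_coeff 0) i j)"
    by (simp add: fun_eq_iff del: P_coeff.simps)
  then have "R_poly 0 u v w = u * P_poly 0 u v w + v * P_poly 0 u v w"
    unfolding R_poly_def P_poly_def
    by (simp only: hom_poly_add hom_poly_shift_u hom_poly_shift_v mult_0_right One_nat_def add_0)
  then show ?thesis
    by (simp add: P_poly_0)
qed

lemma P_poly_Suc: "P_poly (Suc k) u v w = (u + v) * R_poly k u v w + u * w * P_poly k u v w"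
proof -
  have deg: "2 * Suc k = Suc (Suc (2 * k))" by simp
  have "P_coeff (Suc k) =
      (\<lambda>i j. shift_u (R_coeff k) i j + shift_v (R_coeff k) i j + shift_u (P_coeff k) i j)"
    by (simp add: fun_eq_iff del: P_coeff.simps(1) R_coeff.simps)
  then have "P_poly (Suc k) u v w = (u + v) * R_poly k u v w
      + hom_poly (Suc (Suc (2 * k))) (shift_u (P_coeff k)) u v w"
    unfolding P_poly_def R_poly_def deg
    by (simp add: hom_poly_add hom_poly_shift_u hom_poly_shift_v algebra_simps)
  also have "hom_poly (Suc (Suc (2 * k))) (shift_u (P_coeff k)) u v w
      = w * hom_poly (Suc (2 * k)) (shift_u (P_coeff k)) u v w"
    by (rule hom_poly_Suc_eq_times_w) (auto simp: shift_u_def intro!: P_coeff_eq_0_above)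
  finally show ?thesis
    by (simp add: hom_poly_shift_u P_poly_def algebra_simps)
qed

lemma R_poly_Suc: "R_poly (Suc k) u v w = (u + v) * P_poly (Suc k) u v w + v * w * R_poly k u v w"
proof -
  have deg: "2 * Suc k + 1 = Suc (2 * Suc k)" "2 * Suc k = Suc (Suc (2 * k))" by simp_all
  have "R_coeff (Suc k) =
      (\<lambda>i j. shift_u (P_coeff (Suc k)) i j + shift_v (P_coeff (Suc k)) i j
        + shift_v (R_coeff k) i j)"
    by (simp add: fun_eq_iff del: P_coeff.simps R_coeff.simps(1))
  then have "R_poly (Suc k) u v w = (u + v) * P_poly (Suc k) u v w
      + hom_poly (Suc (Suc (Suc (2 * k)))) (shift_v (R_coeff k)) u v w"
    unfolding R_poly_def P_poly_def deg
    by (simp add: hom_poly_add hom_poly_shift_u hom_poly_shift_v algebra_simps del: P_coeff.simps)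
  also have "hom_poly (Suc (Suc (Suc (2 * k)))) (shift_v (R_coeff k)) u v w
      = w * hom_poly (Suc (Suc (2 * k))) (shift_v (R_coeff k)) u v w"
    by (rule hom_poly_Suc_eq_times_w) (auto simp: shift_v_def intro!: R_coeff_eq_0_above)
  finally show ?thesis
    by (simp add: hom_poly_shift_v R_poly_def algebra_simps)
qed

lemma P_R_poly_pos:
  assumes "u > 0" "v > 0" "w > 0"
  shows "P_poly k u v w > 0 \<and> R_poly k u v w > 0"
proof (induction k)
  case 0
  then show ?case using assms by (simp add: P_poly_0 R_poly_0)
next
  case (Suc k)
  then have "P_poly (Suc k) u v w > 0"
    using assms by (simp add: P_poly_Suc add_pos_pos)
  with Suc show ?case
    using assms by (simp add: R_poly_Suc add_pos_pos)
qed

lemma P_poly_Suc_Suc: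
  "P_poly (Suc (Suc k)) u v w
     = (u + v) * (u + v + w) * P_poly (Suc k) u v w - u * v * w\<^sup>2 * P_poly k u v w"
  by (simp add: P_poly_Suc R_poly_Suc algebra_simps power2_eq_square)

lemma casoratian_linear_recurrence:
  fixes p :: "nat \<Rightarrow> 'a::comm_ring_1"
  assumes rec: "\<And>n. p (Suc (Suc n)) = T * p (Suc n) - C * p n"
  shows "p (Suc (Suc n)) * p n - (p (Suc n))\<^sup>2 = C ^ n * (p 2 * p 0 - (p 1)\<^sup>2)"
proof (induction n)
  case 0
  show ?case by (simp add: numeral_2_eq_2)
next
  case (Suc n)
  have "p (Suc (Suc (Suc n))) * p (Suc n) - (p (Suc (Suc n)))\<^sup>2
      = C * (p (Suc (Suc n)) * p n - (p (Suc n))\<^sup>2)"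
    unfolding rec[of "Suc n"] rec[of n] by (simp add: algebra_simps power2_eq_square)
  then show ?case
    using Suc.IH by simp
qed

lemma P_poly_casoratian:
  "P_poly (Suc (Suc k)) u v w * P_poly k u v w - (P_poly (Suc k) u v w)\<^sup>2
     = (u + v)\<^sup>2 * u ^ k * v ^ Suc k * w ^ (2 * k + 1)"
proof -
  have "P_poly 2 u v w * P_poly 0 u v w - (P_poly 1 u v w)\<^sup>2 = (u + v)\<^sup>2 * v * w"
    by (simp add: numeral_2_eq_2 P_poly_Suc R_poly_Suc P_poly_0 R_poly_0
        algebra_simps power2_eq_square)
  with casoratian_linear_recurrence[of "\<lambda>k. P_poly k u v w", OF P_poly_Suc_Suc, of k]
  have "P_poly (Suc (Suc k)) u v w * P_poly k u v w - (P_poly (Suc k) u v w)\<^sup>2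
      = (u * v * w\<^sup>2) ^ k * ((u + v)\<^sup>2 * v * w)"
    by simp
  also have "\<dots> = (u + v)\<^sup>2 * u ^ k * v ^ Suc k * w ^ (2 * k + 1)"
    by (simp add: power_mult_distrib power_add mult_ac flip: power_mult)
  finally show ?thesis .
qed

lemma scaled_casoratian_recurrence:
  fixes p :: "nat \<Rightarrow> real"
  assumes "s \<noteq> 0" "x \<noteq> 0" "p n \<noteq> 0"
    and cas: "p (Suc (Suc n)) * p n - (p (Suc n))\<^sup>2 = A * (s ^ Suc n / x)\<^sup>2"
  shows "p (Suc (Suc n)) * x / s ^ Suc (Suc n)
    = (A + (p (Suc n) * x / s ^ Suc n)\<^sup>2) / (p n * x / s ^ n)"
proof -
  define q where "q j = p j * x / s ^ j" for j
  have "q (Suc (Suc n)) * q n - (q (Suc n))\<^sup>2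
      = (p (Suc (Suc n)) * p n - (p (Suc n))\<^sup>2) * (x / s ^ Suc n)\<^sup>2"
    using assms(1) by (simp add: q_def field_simps power2_eq_square)
  also have "\<dots> = A * (s ^ Suc n / x * (x / s ^ Suc n))\<^sup>2"
    unfolding cas power_mult_distrib by (rule mult.assoc)
  also have "s ^ Suc n / x * (x / s ^ Suc n) = 1"
    using assms(1,2) by simp
  finally have "q (Suc (Suc n)) * q n - (q (Suc n))\<^sup>2 = A"
    by simp
  moreover have "q n \<noteq> 0"
    using assms by (simp add: q_def)
  ultimately have "q (Suc (Suc n)) = (A + (q (Suc n))\<^sup>2) / q n"
    by (simp add: field_simps)
  then show ?thesis
    by (simp add: q_def)
qed

lemma markov_index_consecutive: "markov_index (k, Suc k)"
  by (simp add: markov_index_def)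

lemma markov_family_consecutive:
  assumes fam: "markov_family M" and pos: "x > 0" "y > 0" "z > 0"
  shows "M (k, k + 1) x y z = P_poly k (x\<^sup>2) (y\<^sup>2) (z\<^sup>2) * x / (x * y * z\<^sup>2) ^ k"
proof -
  have base: "M (1, 0) x y z = y" "M (0, 1) x y z = x" "M (1, 1) x y z = (x\<^sup>2 + y\<^sup>2) / z"
    using fam pos unfolding markov_family_def by auto
  have rec: "\<And>a b c d. markov_index (a, b) \<Longrightarrow> markov_index (c, d) \<Longrightarrow>
      \<bar>int a * int d - int b * int c\<bar> = 1 \<Longrightarrow> a + 2 * c \<le> b + 2 * d \<Longrightarrow>
      M (a + 2 * c, b + 2 * d) x y z
        = ((M (c, d) x y z)\<^sup>2 + (M (a + c, b + d) x y z)\<^sup>2) / M (a, b) x y z"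
    using fam pos unfolding markov_family_def by blast
  show ?thesis
  proof (induction k rule: induct_nat_012)
    case 0
    then show ?case using base by (simp add: P_poly_0)
  next
    case 1
    have "M (1, 2) x y z = (x\<^sup>2 + ((x\<^sup>2 + y\<^sup>2) / z)\<^sup>2) / y"
      using rec[of 1 0 0 1] base by (simp add: markov_index_def numeral_2_eq_2)
    then show ?case
      using pos
      by (simp add: P_poly_Suc P_poly_0 R_poly_0 field_simps power2_eq_square numeral_2_eq_2)
  next
    case (ge2 n)
    let ?p = "\<lambda>j. P_poly j (x\<^sup>2) (y\<^sup>2) (z\<^sup>2)"
    have "M (Suc (Suc n), Suc (Suc n) + 1) x y z
        = ((M (1, 1) x y z)\<^sup>2 + (M (Suc n, Suc n + 1) x y z)\<^sup>2) / M (n, n + 1) x y z"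
      using rec[OF markov_index_consecutive[of n], of 1 1]
      by (simp add: markov_index_def algebra_simps)
    also have "\<dots> = ((M (1, 1) x y z)\<^sup>2 + (?p (Suc n) * x / (x * y * z\<^sup>2) ^ Suc n)\<^sup>2)
        / (?p n * x / (x * y * z\<^sup>2) ^ n)"
      using ge2 by simp
    also have "\<dots> = ?p (Suc (Suc n)) * x / (x * y * z\<^sup>2) ^ Suc (Suc n)"
    proof (rule scaled_casoratian_recurrence[symmetric])
      show "?p n \<noteq> 0"
        using P_R_poly_pos[of "x\<^sup>2" "y\<^sup>2" "z\<^sup>2" n] pos by simp
      show "?p (Suc (Suc n)) * ?p n - (?p (Suc n))\<^sup>2
          = (M (1, 1) x y z)\<^sup>2 * ((x * y * z\<^sup>2) ^ Suc n / x)\<^sup>2"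
        unfolding P_poly_casoratian base(3) using pos
        by (simp add: field_simps power_mult_distrib power_add flip: power_mult)
    qed (use pos in auto)
    finally show ?case by simp
  qed
qed

lemma ratio_sum_ge_1_iff:
  fixes i j k :: nat
  assumes "k \<ge> 1"
  shows "real i / real k + real j / real (k + 1) \<ge> 1 \<longleftrightarrow> k < i + j \<or> (i = k \<and> j = 0)"
proof -
  have "real i / real k + real j / real (k + 1) = real (k * (i + j) + i) / real (k * (k + 1))"
    using assms by (simp add: field_simps)
  also have "1 \<le> \<dots> \<longleftrightarrow> real (k * (k + 1)) \<le> real (k * (i + j) + i)"
    using assms by (intro le_divide_eq_1_pos) (simp add: add_pos_pos)
  also have "\<dots> \<longleftrightarrow> k * (k + 1) \<le> k * (i + j) + i"
    by (rule of_nat_le_iff)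
  also have "\<dots> \<longleftrightarrow> k < i + j \<or> (i = k \<and> j = 0)"
  proof (cases "k < i + j")
    case True
    then have "k * (k + 1) \<le> k * (i + j)" by (intro mult_le_mono2) simp
    with True show ?thesis by simp
  next
    case False
    have "k * (i + j) + i < k * (k + 1)" if "i + j < k"
    proof -
      have "k * (i + j) + i \<le> (k + 1) * (i + j)" by simp
      also have "\<dots> < (k + 1) * k" using that by (intro mult_less_mono2) simp_all
      finally show ?thesis by (simp add: mult.commute)
    qed
    with False show ?thesis by (cases "i + j = k") (auto simp: algebra_simps)
  qed
  finally show ?thesis .
qed

theorem corollary5p4:
  fixes M :: "nat \<times> nat \<Rightarrow> real \<Rightarrow> real \<Rightarrow> real \<Rightarrow> real"
    and k :: nat and c :: "nat \<Rightarrow> nat \<Rightarrow> real"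
  assumes "markov_family M"
    and "k \<ge> 1"
    and "\<forall>x y z. x > 0 \<longrightarrow> y > 0 \<longrightarrow> z > 0 \<longrightarrow>
           M (k, k + 1) x y z =
             hom_poly (2 * k) c (x^2) (y^2) (z^2) / (x ^ (k - 1) * y ^ k * z ^ (2 * k))"
  shows "{(i, j). i + j \<le> 2 * k \<and> c i j \<noteq> 0} =
         {(i, j). i + j \<le> 2 * k \<and> real i / real k + real j / real (k + 1) \<ge> 1}"
proof -
  have "hom_poly (2 * k) c (x\<^sup>2) (y\<^sup>2) (z\<^sup>2) = hom_poly (2 * k) (P_coeff k) (x\<^sup>2) (y\<^sup>2) (z\<^sup>2)"
    if "x > 0" "y > 0" "z > 0" for x y z
  proof -
    let ?D = "x ^ (k - 1) * y ^ k * z ^ (2 * k)"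
    have "p * x / (x * y * z\<^sup>2) ^ k = p / ?D" for p
      using that \<open>k \<ge> 1\<close> by (cases k) (simp_all add: power_mult_distrib power_mult power2_eq_square)
    then have "hom_poly (2 * k) c (x\<^sup>2) (y\<^sup>2) (z\<^sup>2) / ?D = P_poly k (x\<^sup>2) (y\<^sup>2) (z\<^sup>2) / ?D"
      using assms(3) markov_family_consecutive[OF assms(1) that, of k] that by simp
    moreover have "?D > 0" using that by simp
    ultimately show ?thesis
      using that by (simp add: P_poly_def)
  qed
  then have "c i j = P_coeff k i j" if "i + j \<le> 2 * k" for i j
    using hom_poly_coeffs_unique[OF _ that] by (metis real_sqrt_pow2 less_imp_le real_sqrt_gt_zero)
  then have "c i j \<noteq> 0 \<longleftrightarrow> real i / real k + real j / real (k + 1) \<ge> 1" if "i + j \<le> 2 * k" for i j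
    using that P_coeff_nonzero_iff[of k i j] ratio_sum_ge_1_iff[OF \<open>k \<ge> 1\<close>, of i j] by simp
  then show ?thesis
    by auto
qed

end
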